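(* Under the setup in the context, let $\tilde{\mathbf J}$ be the TDOA-only Fisher information matrix and $\widetilde{\mathrm{CRB}}_{xy}=[\tilde{\mathbf J}^{-1}]_{1,1}+[\tilde{\mathbf J}^{-1}]_{2,2}$, $\widetilde{\mathrm{CRB}}_z=[\tilde{\mathbf J}^{-1}]_{3,3}$. Then almost surely the limits $\widetilde{\mathrm{LCRB}}_{xy}=\lim_{N\to\infty}N\,\widetilde{\mathrm{CRB}}_{xy}$ and $\widetilde{\mathrm{LCRB}}_z=\lim_{N\to\infty}N\,\widetilde{\mathrm{CRB}}_z$ exist and $$\widetilde{\mathrm{LCRB}}_{xy}=\frac{4}{\tilde A},\qquad \widetilde{\mathrm{LCRB}}_z=\frac{B}{\tilde C B-E^2},$$ where $$\tilde A=2\rho\eta\Big(\log\!\Big(\frac{D_{\max}}{h}\Big)\frac{(r+h)^2+r^2}{4r^3(r+h)}-\frac{(1-\chi_{\max})\big(D_{\max}^2+r(r+h)(1+\chi_{\max})\big)}{4r^2D_{\max}^2}\Big),$$ $$B=\frac{\eta\rho}{rR}\log\frac{D_{\max}}{h},\qquad E=\frac{\eta\rho}{r^2}\Big(1-\frac{R-r\chi_{\max}}{D_{\max}}\Big),$$ $$\tilde C=\rho\eta\Big[\frac{(1-\chi_{\max})\big((R+r)^2+D_{\max}^2\big)}{4r^2D_{\max}^2}-\frac{(R^2-r^2)}{2r^3R}\log\frac{D_{\max}}{h}\Big].$$ (Here $\tilde A=\mathrm E[L_i\sin^2\phi_{L,i}\mathbf 1_i]$, $\tilde C=\mathrm E[L_i\cos^2\phi_{L,i}\mathbf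 1_i]$, $B=\mathrm E[L_i\mathbf 1_i]$, $E=\mathrm E[L_i\cos\phi_{L,i}\mathbf 1_i]$.)
   Context: Setup. A receiver lies at distance $r>0$ from the Earth's center, at the point $(0,0,r)$ of Earth-centered coordinates. $N$ satellites are placed independently and uniformly at random on the sphere of radius $R=r+h$ ($h>0$) about the Earth's center. For satellite $i$, $\phi_{E,i}\in[0,\pi]$ is its polar angle measured from the receiver's direction and $\theta_i$ its azimuth; thus $\cos\phi_{E,i}$ is uniform on $[-1,1]$ and $\theta_i$ is uniform on $[0,2\pi)$, independently. The receiver–satellite distance is $D_i=\sqrt{R^2+r^2-2rR\cos\phi_{E,i}}$. The local zenith angle $\phi_{L,i}\in[0,\pi]$ is defined by $D_i\cos\phi_{L,i}=R\cos\phi_{E,i}-r$, $D_i\sin\phi_{L,i}=R\sin\phi_{E,i}$. Fix $\phi_{L,\max}\in(0,\pi/2)$; satellite $i$ is visible iff $\phi_{L,i}\le\phi_{L,\max}$, and $\mathbf 1_i$ denotes the indicator of this event. Let $\zeta=\cos\phi_{L,\max}$, $D_{\max}=-r\zeta+\sqrt{h^2+2hr+r^2\zeta^2}$, and $\chi_{\max}=(R^2+r^2-D_{\max}^2)/(2rR)$. Fix constants $\rho>0$, $\eta>0$ and set $L_i=2\eta\rho/D_i^2$, $u_i=(\sin\phi_{L,i}\cos\theta_i,\ \sin\phi_{L,i}\sin\theta_i,\ \cos\phi_{L,i})^T$. The unknown parameters are the receiver position $(x,y,z)$ and clock offset $T_0$. The TDOA Fisher information matrix is $$\tilde{\mathbf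 J}=\sum_{i=1}^N\mathbf 1_iL_i\begin{pmatrix}u_iu_i^T & u_i\\ u_i^T & 1\end{pmatrix}.$$ *)

theory Defs
  imports "HOL-Probability.Probability"
begin

text \<open>Geometry of a single satellite, given c = cos(phi_E) and azimuth theta.
  R = r + h is the orbit radius.\<close>

definition satD :: "real \<Rightarrow> real \<Rightarrow> real \<Rightarrow> real" where
  "satD r h c = sqrt ((r + h)^2 + r^2 - 2 * r * (r + h) * c)"

text \<open>Local zenith angle phi_L in [0,pi], determined by
  D cos phi_L = R cos phi_E - r and D sin phi_L = R sin phi_E (sin phi_E >= 0).\<close>
definition phiL :: "real \<Rightarrow> real \<Rightarrow> real \<Rightarrow> real" where
  "phiL r h c = arccos (((r + h) * c - r) / satD r h c)"

definition visible :: "real \<Rightarrow> real \<Rightarrow> real \<Rightarrow> real \<Rightarrow> bool" where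
  "visible r h phiLmax c \<longleftrightarrow> phiL r h c \<le> phiLmax"

definition satL :: "real \<Rightarrow> real \<Rightarrow> real \<Rightarrow> real \<Rightarrow> real \<Rightarrow> real" where
  "satL \<rho> \<eta> r h c = 2 * \<eta> * \<rho> / (satD r h c)^2"

definition augU :: "real \<Rightarrow> real \<Rightarrow> real \<Rightarrow> real \<Rightarrow> real^4" where
  "augU r h c \<theta> = vector [sin (phiL r h c) * cos \<theta>, sin (phiL r h c) * sin \<theta>,
                             cos (phiL r h c), 1]"

text \<open>TDOA Fisher information matrix of the first N satellites
  (satellites indexed 0..N-1), with cos phi_E values cs and azimuths ths.\<close>
definition tdoaFIM ::
  "real \<Rightarrow> real \<Rightarrow> real \<Rightarrow> real \<Rightarrow> real \<Rightarrow> (nat \<Rightarrow> real) \<Rightarrow> (nat \<Rightarrow> real) \<Rightarrow> nat \<Rightarrow> real^4^4" where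
  "tdoaFIM \<rho> \<eta> r h phiLmax cs ths N =
     (\<Sum>i<N. (if visible r h phiLmax (cs i) then satL \<rho> \<eta> r h (cs i) else 0) *\<^sub>R
        (\<chi> a b. augU r h (cs i) (ths i) $ a * augU r h (cs i) (ths i) $ b))"

definition Dmax :: "real \<Rightarrow> real \<Rightarrow> real \<Rightarrow> real" where
  "Dmax r h phiLmax = - r * cos phiLmax + sqrt (h^2 + 2 * h * r + r^2 * (cos phiLmax)^2)"

definition chimax :: "real \<Rightarrow> real \<Rightarrow> real \<Rightarrow> real" where
  "chimax r h phiLmax = ((r + h)^2 + r^2 - (Dmax r h phiLmax)^2) / (2 * r * (r + h))"

definition Atil :: "real \<Rightarrow> real \<Rightarrow> real \<Rightarrow> real \<Rightarrow> real \<Rightarrow> real" where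
  "Atil \<rho> \<eta> r h phiLmax = (let Dm = Dmax r h phiLmax; \<chi>m = chimax r h phiLmax in
     2 * \<rho> * \<eta> * (ln (Dm / h) * ((r + h)^2 + r^2) / (4 * r^3 * (r + h))
       - (1 - \<chi>m) * (Dm^2 + r * (r + h) * (1 + \<chi>m)) / (4 * r^2 * Dm^2)))"

definition Bc :: "real \<Rightarrow> real \<Rightarrow> real \<Rightarrow> real \<Rightarrow> real \<Rightarrow> real" where
  "Bc \<rho> \<eta> r h phiLmax = \<eta> * \<rho> / (r * (r + h)) * ln (Dmax r h phiLmax / h)"

definition Ec :: "real \<Rightarrow> real \<Rightarrow> real \<Rightarrow> real \<Rightarrow> real \<Rightarrow> real" where
  "Ec \<rho> \<eta> r h phiLmax = \<eta> * \<rho> / r^2 *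
     (1 - ((r + h) - r * chimax r h phiLmax) / Dmax r h phiLmax)"

definition Ctil :: "real \<Rightarrow> real \<Rightarrow> real \<Rightarrow> real \<Rightarrow> real \<Rightarrow> real" where
  "Ctil \<rho> \<eta> r h phiLmax = (let Dm = Dmax r h phiLmax; \<chi>m = chimax r h phiLmax; R = r + h in
     \<rho> * \<eta> * ((1 - \<chi>m) * ((R + r)^2 + Dm^2) / (4 * r^2 * Dm^2)
       - (R^2 - r^2) / (2 * r^3 * R) * ln (Dm / h)))"

end

theory Submission
  imports Defs
begin

(* Each entry of the Fisher information matrix is a sum over satellites of i.i.d. bounded terms,
   so by the strong law of large numbers (for bounded variables a consequence of Hoeffding's
   inequality and Borel--Cantelli) J / N converges almost surely to the expected contribution
   of one satellite.  That contribution factors into a function of cos phi_E and one of the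
   azimuth; averaging over the azimuth decouples the horizontal coordinates from (z, T0), and
   averaging over the visible cap chimax <= cos phi_E <= 1 leaves the moments m_k of
   cos^k phi_L / D^2, which are computed in closed form.  The limit is
   eta rho diag((m0 - m2)/2, (m0 - m2)/2, [[m2, m1], [m1, m0]]), invertible because m0 > m2 and,
   by Cauchy--Schwarz, m2 m0 > m1^2; since inversion is continuous at invertible matrices,
   N J^-1 converges to its inverse. *)

section \<open>Inverses of converging matrices\<close>

lemma matrix_mul_matrix_inv:
  fixes A :: "real^'n^'n"
  assumes "det A \<noteq> 0"
  shows "A ** matrix_inv A = mat 1" and "matrix_inv A ** A = mat 1"
proof -
  have "\<exists>A'. A ** A' = mat 1 \<and> A' ** A = mat 1"
    using assms invertible_det_nz unfolding invertible_def by blast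
  then have "A ** matrix_inv A = mat 1 \<and> matrix_inv A ** A = mat 1"
    unfolding matrix_inv_def by (rule someI_ex)
  then show "A ** matrix_inv A = mat 1" and "matrix_inv A ** A = mat 1" by simp_all
qed

lemma matrix_inv_eqI:
  fixes A B :: "real^'n^'n"
  assumes "A ** B = mat 1"
  shows "matrix_inv A = B"
proof -
  have "det A \<noteq> 0"
    using assms invertible_det_nz invertible_right_inverse by blast
  have "matrix_inv A = matrix_inv A ** (A ** B)"
    by (simp add: assms)
  also have "\<dots> = (matrix_inv A ** A) ** B"
    by (simp add: matrix_mul_assoc)
  finally show ?thesis
    using \<open>det A \<noteq> 0\<close> by (simp add: matrix_mul_matrix_inv)
qed

lemma matrix_inv_scaleR:
  fixes A :: "real^'n^'n"
  assumes "det A \<noteq> 0" and "c \<noteq> 0"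
  shows "matrix_inv (c *\<^sub>R A) = (1 / c) *\<^sub>R matrix_inv A"
  by (rule matrix_inv_eqI)
     (use assms in \<open>simp add: matrix_scalar_ac scalar_matrix_assoc[symmetric] matrix_mul_matrix_inv\<close>)

lemma matrix_inv_nth_cramer:
  fixes A :: "real^'n^'n"
  assumes "det A \<noteq> 0"
  shows "matrix_inv A $ i $ j =
    det (\<chi> p q. if q = i then (if p = j then 1 else 0) else A $ p $ q) / det A"
proof -
  let ?b = "axis j (1::real)"
  have "A *v (matrix_inv A *v ?b) = ?b"
    by (simp add: matrix_vector_mul_assoc matrix_mul_matrix_inv[OF assms])
  then have "(matrix_inv A *v ?b) $ i = det (\<chi> p q. if q = i then ?b $ p else A $ p $ q) / det A"
    using cramer[OF assms] by simp
  moreover have "(matrix_inv A *v ?b) $ i = matrix_inv A $ i $ j"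
    by (simp add: matrix_vector_mult_def axis_def if_distrib cong: if_cong)
  moreover have "(\<chi> p q. if q = i then ?b $ p else A $ p $ q) =
      (\<chi> p q. if q = i then (if p = j then 1 else 0) else A $ p $ q)"
    by (simp add: axis_def vec_eq_iff)
  ultimately show ?thesis
    by simp
qed

lemma tendsto_det:
  fixes A :: "nat \<Rightarrow> real^'n^'n"
  assumes "\<And>i j. (\<lambda>n. A n $ i $ j) \<longlonglongrightarrow> B $ i $ j"
  shows "(\<lambda>n. det (A n)) \<longlonglongrightarrow> det B"
  unfolding det_def by (intro tendsto_intros assms)

lemma tendsto_matrix_inv_nth:
  fixes A :: "nat \<Rightarrow> real^'n^'n"
  assumes lim: "\<And>i j. (\<lambda>n. A n $ i $ j) \<longlonglongrightarrow> B $ i $ j" and "det B \<noteq> 0"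
  shows "(\<lambda>n. matrix_inv (A n) $ i $ j) \<longlonglongrightarrow> matrix_inv B $ i $ j"
proof -
  let ?N = "\<lambda>C::real^'n^'n. (\<chi> p q. if q = i then (if p = j then 1 else 0) else C $ p $ q) :: real^'n^'n"
  have det_lim: "(\<lambda>n. det (A n)) \<longlonglongrightarrow> det B"
    by (rule tendsto_det[OF lim])
  have "(\<lambda>n. det (?N (A n))) \<longlonglongrightarrow> det (?N B)"
    by (rule tendsto_det) (auto intro: lim)
  then have "(\<lambda>n. det (?N (A n)) / det (A n)) \<longlonglongrightarrow> matrix_inv B $ i $ j"
    unfolding matrix_inv_nth_cramer[OF \<open>det B \<noteq> 0\<close>]
    by (intro tendsto_divide det_lim \<open>det B \<noteq> 0\<close>)
  moreover have "eventually (\<lambda>n. det (?N (A n)) / det (A n) = matrix_inv (A n) $ i $ j) sequentially"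
    using tendsto_imp_eventually_ne[OF det_lim \<open>det B \<noteq> 0\<close>]
    by eventually_elim (simp add: matrix_inv_nth_cramer)
  ultimately show ?thesis
    by (rule Lim_transform_eventually)
qed

lemma tendsto_scaled_matrix_inv_nth:
  fixes A :: "nat \<Rightarrow> real^'n^'n"
  assumes "\<And>i j. (\<lambda>n. A n $ i $ j / real n) \<longlonglongrightarrow> B $ i $ j" and "det B \<noteq> 0"
  shows "(\<lambda>n. real n * matrix_inv (A n) $ i $ j) \<longlonglongrightarrow> matrix_inv B $ i $ j"
proof -
  let ?A' = "\<lambda>n. (1 / real n) *\<^sub>R A n"
  have lim: "(\<lambda>n. ?A' n $ i $ j) \<longlonglongrightarrow> B $ i $ j" for i j
    using assms(1)[of i j] by simp
  have det_lim: "(\<lambda>n. det (?A' n)) \<longlonglongrightarrow> det B"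
    by (rule tendsto_det[OF lim])
  have "eventually (\<lambda>n. matrix_inv (?A' n) $ i $ j = real n * matrix_inv (A n) $ i $ j) sequentially"
    using tendsto_imp_eventually_ne[OF det_lim \<open>det B \<noteq> 0\<close>] eventually_gt_at_top[of 0]
  proof eventually_elim
    case (elim n)
    then have "A n = real n *\<^sub>R ?A' n" by simp
    then have "matrix_inv (A n) = (1 / real n) *\<^sub>R matrix_inv (?A' n)"
      using elim by (metis matrix_inv_scaleR of_nat_0_less_iff order_less_irrefl)
    then show ?case using elim by simp
  qed
  with tendsto_matrix_inv_nth[OF lim \<open>det B \<noteq> 0\<close>] show ?thesis
    by (rule Lim_transform_eventually)
qed

section \<open>Sums of independent bounded variables\<close>

context prob_space
begin

lemma prob_sum_deviation_ge_le:
  fixes Y :: "nat \<Rightarrow> 'a \<Rightarrow> real"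
  assumes ind: "indep_vars (\<lambda>_. borel) Y UNIV"
    and bounded: "\<And>i \<omega>. \<omega> \<in> space M \<Longrightarrow> Y i \<omega> \<in> {-K..K}" and "0 < K"
    and mean: "\<And>i. expectation (Y i) = \<mu>" and "0 < e"
  shows "prob {\<omega> \<in> space M. real n * e \<le> \<bar>(\<Sum>i<n. Y i \<omega>) - real n * \<mu>\<bar>}
           \<le> 2 * exp (- (e^2 / (2 * K^2))) ^ n"
proof (cases "n = 0")
  case True
  then show ?thesis
    by (simp add: prob_space)
next
  case False
  interpret Hoeffding_ineq M "{..<n}" Y "\<lambda>_. -K" "\<lambda>_. K" "real n * \<mu>"
  proof unfold_locales
    show "indep_vars (\<lambda>_. borel) Y {..<n}"
      using indep_vars_subset[OF ind] by blast
  qed (use bounded mean in auto)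
  have "prob {\<omega> \<in> space M. real n * e \<le> \<bar>(\<Sum>i<n. Y i \<omega>) - real n * \<mu>\<bar>}
      \<le> 2 * exp (-2 * (real n * e)\<^sup>2 / (\<Sum>i<n. (K - - K)\<^sup>2))"
    by (rule Hoeffding_ineq_abs_ge) (use \<open>0 < e\<close> \<open>0 < K\<close> False in auto)
  also have "-2 * (real n * e)\<^sup>2 / (\<Sum>i<n. (K - - K)\<^sup>2) = real n * (- (e^2 / (2 * K^2)))"
    using \<open>0 < K\<close> False by (simp add: power2_eq_square field_simps)
  also have "exp (real n * (- (e^2 / (2 * K^2)))) = exp (- (e^2 / (2 * K^2))) ^ n"
    by (rule exp_of_nat_mult)
  finally show ?thesis .
qed

lemma AE_eventually_sum_deviation_less:
  fixes Y :: "nat \<Rightarrow> 'a \<Rightarrow> real"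
  assumes ind: "indep_vars (\<lambda>_. borel) Y UNIV"
    and bounded: "\<And>i \<omega>. \<omega> \<in> space M \<Longrightarrow> Y i \<omega> \<in> {-K..K}" and "0 < K"
    and mean: "\<And>i. expectation (Y i) = \<mu>" and "0 < e"
  shows "AE \<omega> in M. eventually (\<lambda>n. \<bar>(\<Sum>i<n. Y i \<omega>) - real n * \<mu>\<bar> < real n * e) sequentially"
proof -
  have [measurable]: "\<And>i. random_variable borel (Y i)"
    using ind unfolding indep_vars_def by blast
  let ?dev = "\<lambda>n. {\<omega> \<in> space M. real n * e \<le> \<bar>(\<Sum>i<n. Y i \<omega>) - real n * \<mu>\<bar>}"
  have "AE \<omega> in M. eventually (\<lambda>n. \<omega> \<in> space M - ?dev n) sequentially"
  proof (rule borel_cantelli_AE1)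
    have "exp (- (e^2 / (2 * K^2))) < 1"
      using \<open>0 < e\<close> \<open>0 < K\<close> by simp
    then show "summable (\<lambda>n. measure M (?dev n))"
      by (intro summable_comparison_test[OF _ summable_mult[OF summable_geometric]])
         (auto intro: prob_sum_deviation_ge_le[OF assms])
  qed (auto simp: less_top[symmetric])
  then show ?thesis
    by eventually_elim (auto elim: eventually_mono)
qed

lemma strong_law_bounded:
  fixes Y :: "nat \<Rightarrow> 'a \<Rightarrow> real"
  assumes ind: "indep_vars (\<lambda>_. borel) Y UNIV"
    and bounded: "\<And>i \<omega>. \<omega> \<in> space M \<Longrightarrow> Y i \<omega> \<in> {-K..K}" and "0 < K"
    and mean: "\<And>i. expectation (Y i) = \<mu>"
  shows "AE \<omega> in M. (\<lambda>n. (\<Sum>i<n. Y i \<omega>) / real n) \<longlonglongrightarrow> \<mu>"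
proof -
  have "AE \<omega> in M. \<forall>m::nat.
      eventually (\<lambda>n. \<bar>(\<Sum>i<n. Y i \<omega>) - real n * \<mu>\<bar> < real n * (1 / Suc m)) sequentially"
    by (subst AE_all_countable) (intro allI AE_eventually_sum_deviation_less[OF assms]; simp)
  then show ?thesis
  proof eventually_elim
    case (elim \<omega>)
    show ?case
    proof (rule LIMSEQ_I)
      fix d :: real
      assume "0 < d"
      then obtain m where m: "1 / real (Suc m) < d"
        using reals_Archimedean by (auto simp: inverse_eq_divide)
      have "eventually (\<lambda>n. norm ((\<Sum>i<n. Y i \<omega>) / real n - \<mu>) < d) sequentially"
        using elim[rule_format, of m] eventually_gt_at_top[of 0]
      proof eventually_elim
        case (elim n)
        then have "\<bar>(\<Sum>i<n. Y i \<omega>) / real n - \<mu>\<bar> < 1 / Suc m"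
          by (simp add: field_simps abs_divide[symmetric] divide_less_eq)
        then show ?case
          using m by simp
      qed
      then show "\<exists>n0. \<forall>n\<ge>n0. norm ((\<Sum>i<n. Y i \<omega>) / real n - \<mu>) < d"
        by (simp add: eventually_sequentially)
    qed
  qed
qed

lemma indep_var_Inl_Inr:
  fixes X Y :: "'i \<Rightarrow> 'a \<Rightarrow> real"
  assumes "indep_vars (\<lambda>_. borel) (\<lambda>k. case k of Inl i \<Rightarrow> X i | Inr i \<Rightarrow> Y i) UNIV"
  shows "indep_var borel (X i) borel (Y i)"
proof -
  let ?Z = "\<lambda>k. case k of Inl i \<Rightarrow> X i | Inr i \<Rightarrow> Y i"
  define sel where "sel = (\<lambda>b::bool. if b then Inl i else Inr i)"
  have "indep_vars (\<lambda>b. PiM {sel b} (\<lambda>_. borel)) (\<lambda>b \<omega>. restrict (\<lambda>k. ?Z k \<omega>) {sel b}) UNIV"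
    by (rule indep_vars_restrict[OF assms]) (auto simp: disjoint_family_on_def sel_def)
  then have "indep_vars (\<lambda>_. borel) (\<lambda>b \<omega>. (\<lambda>f. f (sel b)) (restrict (\<lambda>k. ?Z k \<omega>) {sel b})) UNIV"
    by (rule indep_vars_compose2) (rule measurable_component_singleton, simp)
  moreover have "(\<lambda>b \<omega>. (\<lambda>f. f (sel b)) (restrict (\<lambda>k. ?Z k \<omega>) {sel b})) = case_bool (X i) (Y i)"
    by (auto simp: fun_eq_iff sel_def split: bool.split)
  moreover have "(\<lambda>_::bool. borel :: real measure) = case_bool borel borel"
    by (auto simp: fun_eq_iff split: bool.split)
  ultimately show ?thesis
    unfolding indep_var_def by simp
qed

lemma indep_vars_mult_Inl_Inr:
  fixes X Y :: "'i \<Rightarrow> 'a \<Rightarrow> real" and f g :: "real \<Rightarrow> real"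
  assumes "indep_vars (\<lambda>_. borel) (\<lambda>k. case k of Inl i \<Rightarrow> X i | Inr i \<Rightarrow> Y i) UNIV"
    and [measurable]: "f \<in> borel_measurable borel" "g \<in> borel_measurable borel"
  shows "indep_vars (\<lambda>_. borel) (\<lambda>j \<omega>. f (X j \<omega>) * g (Y j \<omega>)) UNIV"
proof -
  let ?Z = "\<lambda>k. case k of Inl i \<Rightarrow> X i | Inr i \<Rightarrow> Y i"
  have "indep_vars (\<lambda>j. PiM {Inl j, Inr j} (\<lambda>_. borel)) (\<lambda>j \<omega>. restrict (\<lambda>k. ?Z k \<omega>) {Inl j, Inr j}) UNIV"
    by (rule indep_vars_restrict[OF assms(1)]) (auto simp: disjoint_family_on_def)
  then have "indep_vars (\<lambda>_. borel)
      (\<lambda>j \<omega>. (\<lambda>F. f (F (Inl j)) * g (F (Inr j))) (restrict (\<lambda>k. ?Z k \<omega>) {Inl j, Inr j})) UNIV"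
  proof (rule indep_vars_compose2)
    fix j
    have [measurable]: "(\<lambda>F. F k) \<in> measurable (PiM {Inl j, Inr j} (\<lambda>_. borel :: real measure)) borel"
      if "k \<in> {Inl j, Inr j}" for k
      using that by (rule measurable_component_singleton)
    show "(\<lambda>F. f (F (Inl j)) * g (F (Inr j))) \<in> borel_measurable (PiM {Inl j, Inr j} (\<lambda>_. borel))"
      by measurable
  qed
  then show ?thesis
    by simp
qed

lemma expectation_mult_Inl_Inr:
  fixes X Y :: "'i \<Rightarrow> 'a \<Rightarrow> real" and f g :: "real \<Rightarrow> real"
  assumes ind: "indep_vars (\<lambda>_. borel) (\<lambda>k. case k of Inl i \<Rightarrow> X i | Inr i \<Rightarrow> Y i) UNIV"
    and [measurable]: "f \<in> borel_measurable borel" "g \<in> borel_measurable borel"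
    and "\<And>x. \<bar>f x\<bar> \<le> B\<^sub>f" "\<And>x. \<bar>g x\<bar> \<le> B\<^sub>g"
  shows "expectation (\<lambda>\<omega>. f (X j \<omega>) * g (Y j \<omega>)) =
    integral\<^sup>L (distr M lborel (X j)) f * integral\<^sup>L (distr M lborel (Y j)) g"
proof -
  have indep: "indep_var borel (f \<circ> X j) borel (g \<circ> Y j)"
    by (rule indep_var_compose[OF indep_var_Inl_Inr[OF ind]]) simp_all
  have [measurable]: "X j \<in> borel_measurable M" "Y j \<in> borel_measurable M"
    using indep_var_Inl_Inr[OF ind, of j] unfolding indep_var_def indep_vars_def
    by (auto split: bool.splits)
  have "integrable M (f \<circ> X j)"
    by (rule integrable_const_bound[where B = "B\<^sub>f"]) (simp_all add: assms(4))
  moreover have "integrable M (g \<circ> Y j)"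
    by (rule integrable_const_bound[where B = "B\<^sub>g"]) (simp_all add: assms(5))
  ultimately
  have "expectation (\<lambda>\<omega>. f (X j \<omega>) * g (Y j \<omega>)) = expectation (f \<circ> X j) * expectation (g \<circ> Y j)"
    using indep_var_lebesgue_integral[OF indep] by (simp add: o_def)
  also have "\<dots> = integral\<^sup>L (distr M lborel (X j)) f * integral\<^sup>L (distr M lborel (Y j)) g"
    by (simp add: integral_distr o_def)
  finally show ?thesis .
qed

end

section \<open>Integrals on intervals\<close>

lemma has_integral_real_derivative:
  fixes F f :: "real \<Rightarrow> real"
  assumes "a \<le> b" "\<And>x. a \<le> x \<Longrightarrow> x \<le> b \<Longrightarrow> (F has_real_derivative f x) (at x)"
  shows "(f has_integral (F b - F a)) {a..b}"
  using assms
  by (intro fundamental_theorem_of_calculus)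
     (auto simp: has_real_derivative_iff_has_vector_derivative[symmetric] intro: has_field_derivative_at_within)

lemma integral_pos_if_continuous_nonneg:
  fixes f :: "real \<Rightarrow> real"
  assumes "continuous_on {a..b} f" "a < b" "\<And>x. x \<in> {a..b} \<Longrightarrow> 0 \<le> f x"
    and "y \<in> {a..b}" "f y \<noteq> 0"
  shows "0 < integral {a..b} f"
proof -
  have "0 \<le> integral {a..b} f"
    using assms integrable_continuous_interval by (intro integral_nonneg) auto
  moreover have "integral {a..b} f \<noteq> 0"
    using integral_eq_0_iff[OF assms(1-3)] assms(4,5) by blast
  ultimately show ?thesis by simp
qed

text \<open>Strict Cauchy--Schwarz: expand \<open>0 < \<integral> (f - t)\<^sup>2 w\<close> at \<open>t = I 1 / I 0\<close>.\<close>

lemma integral_weighted_variance_pos: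
  fixes f w :: "real \<Rightarrow> real"
  assumes cont: "continuous_on {a..b} f" "continuous_on {a..b} w" and "a < b"
    and w_pos: "\<And>x. x \<in> {a..b} \<Longrightarrow> 0 < w x"
    and "x0 \<in> {a..b}" "x1 \<in> {a..b}" "f x0 \<noteq> f x1"
  defines "I k \<equiv> integral {a..b} (\<lambda>x. f x ^ k * w x)"
  shows "0 < I 2 * I 0 - (I 1)^2"
proof -
  have has_I: "((\<lambda>x. f x ^ k * w x) has_integral I k) {a..b}" for k
    unfolding I_def using cont
    by (intro integrable_integral integrable_continuous_interval continuous_intros)
  have "0 < I 0"
    unfolding I_def using cont(2) \<open>a < b\<close> \<open>x0 \<in> {a..b}\<close> w_pos[OF \<open>x0 \<in> {a..b}\<close>, THEN less_imp_neq]
    by (intro integral_pos_if_continuous_nonneg[where y = x0]) (simp_all add: less_imp_le w_pos)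
  define t where "t = I 1 / I 0"
  obtain y where "y \<in> {a..b}" "f y \<noteq> t"
    using \<open>x0 \<in> {a..b}\<close> \<open>x1 \<in> {a..b}\<close> \<open>f x0 \<noteq> f x1\<close> by metis
  have "((\<lambda>x. (f x - t)^2 * w x) has_integral (I 2 - 2 * t * I 1 + t^2 * I 0)) {a..b}"
  proof -
    have "(\<lambda>x. (f x - t)^2 * w x) =
        (\<lambda>x. f x ^ 2 * w x - (2 * t) * (f x ^ 1 * w x) + t^2 * (f x ^ 0 * w x))"
      by (simp add: fun_eq_iff power2_eq_square algebra_simps)
    then show ?thesis
      by (simp only:) (intro has_integral_add has_integral_diff has_integral_mult_right has_I)
  qed
  moreover have "0 < integral {a..b} (\<lambda>x. (f x - t)^2 * w x)"
    using cont \<open>a < b\<close> \<open>y \<in> {a..b}\<close> \<open>f y \<noteq> t\<close> w_pos[OF \<open>y \<in> {a..b}\<close>, THEN less_imp_neq]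
    by (intro integral_pos_if_continuous_nonneg[where y = y] continuous_intros)
       (simp_all add: less_imp_le w_pos)
  ultimately have "0 < I 0 * (I 2 - 2 * t * I 1 + t^2 * I 0)"
    using \<open>0 < I 0\<close> by (simp add: integral_unique)
  also have "\<dots> = I 2 * I 0 - (I 1)^2"
    unfolding t_def using \<open>0 < I 0\<close> by (simp add: field_simps power2_eq_square)
  finally show ?thesis .
qed

lemma integral_uniform_measure_lborel:
  fixes S :: "real set" and f :: "real \<Rightarrow> real"
  assumes "S \<in> sets borel" "emeasure lborel S = ennreal m" "0 < m" and "f \<in> borel_measurable borel"
  shows "integral\<^sup>L (uniform_measure lborel S) f = (\<integral>x. indicator S x * f x \<partial>lborel) / m"
proof -
  have "uniform_measure lborel S = density lborel (\<lambda>x. ennreal (indicator S x / m))"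
    unfolding uniform_measure_def \<open>emeasure lborel S = ennreal m\<close>
  proof (rule density_cong)
    show "AE x in lborel. indicator S x / ennreal m = ennreal (indicator S x / m)"
      using \<open>0 < m\<close> by (intro AE_I2) (simp add: ennreal_indicator[symmetric] divide_ennreal)
  qed (use assms in simp_all)
  then have "integral\<^sup>L (uniform_measure lborel S) f = (\<integral>x. (indicator S x / m) *\<^sub>R f x \<partial>lborel)"
    using assms by (simp add: integral_density)
  also have "\<dots> = (\<integral>x. indicator S x * f x / m \<partial>lborel)"
    by simp
  also have "\<dots> = (\<integral>x. indicator S x * f x \<partial>lborel) / m"
    by (rule integral_divide_zero)
  finally show ?thesis .
qed

lemma lborel_integral_indicator_eq_integral:
  fixes f :: "real \<Rightarrow> real"
  assumes "continuous_on {a..b} f"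
  shows "(\<integral>x. indicator {a..b} x * f x \<partial>lborel) = integral {a..b} f"
  using set_borel_integral_eq_integral(2)[OF borel_integrable_atLeastAtMost'[OF assms]]
  by (simp add: set_lebesgue_integral_def)

lemma integral_uniform_measure_0_2pi:
  fixes f :: "real \<Rightarrow> real"
  assumes "continuous_on UNIV f"
  shows "integral\<^sup>L (uniform_measure lborel {0..<2*pi}) f = integral {0..2*pi} f / (2*pi)"
proof -
  have [measurable]: "f \<in> borel_measurable borel"
    using assms by (rule borel_measurable_continuous_onI)
  have "integral\<^sup>L (uniform_measure lborel {0..<2*pi}) f
      = (\<integral>x. indicator {0..<2*pi} x * f x \<partial>lborel) / (2*pi)"
    by (subst integral_uniform_measure_lborel[where m = "2*pi"]) auto
  also have "(\<integral>x. indicator {0..<2*pi} x * f x \<partial>lborel) = (\<integral>x. indicator {0..2*pi} x * f x \<partial>lborel)"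
    using AE_lborel_singleton[of "2*pi"]
    by (intro integral_cong_AE) (auto simp: indicator_def elim!: eventually_mono)
  also have "\<dots> = integral {0..2*pi} f"
    using assms by (intro lborel_integral_indicator_eq_integral continuous_on_subset[OF assms]) auto
  finally show ?thesis .
qed

lemma integral_cos_0_2pi: "integral {0..2*pi} cos = 0"
  using has_integral_real_derivative[of 0 "2*pi" sin cos]
  by (auto intro!: derivative_eq_intros simp: integral_unique)

lemma integral_sin_0_2pi: "integral {0..2*pi} sin = 0"
  using has_integral_real_derivative[of 0 "2*pi" "\<lambda>x. - cos x" sin]
  by (auto intro!: derivative_eq_intros simp: integral_unique)

lemma integral_cos_sq_0_2pi: "integral {0..2*pi} (\<lambda>x. cos x * cos x) = pi"
proof -
  have "((\<lambda>x. cos x * cos x) has_integral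
      ((2*pi + sin (2*pi) * cos (2*pi)) / 2 - (0 + sin 0 * cos 0) / 2)) {0..2*pi}"
  proof (rule has_integral_real_derivative)
    fix x :: real
    show "((\<lambda>x. (x + sin x * cos x) / 2) has_real_derivative cos x * cos x) (at x)"
      by (auto intro!: derivative_eq_intros simp: field_simps)
         (use sin_cos_squared_add3[of x] in linarith)
  qed simp
  then show ?thesis
    by (simp add: integral_unique)
qed

lemma integral_sin_sq_0_2pi: "integral {0..2*pi} (\<lambda>x. sin x * sin x) = pi"
proof -
  have "((\<lambda>x. sin x * sin x) has_integral
      ((2*pi - sin (2*pi) * cos (2*pi)) / 2 - (0 - sin 0 * cos 0) / 2)) {0..2*pi}"
  proof (rule has_integral_real_derivative)
    fix x :: real
    show "((\<lambda>x. (x - sin x * cos x) / 2) has_real_derivative sin x * sin x) (at x)"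
      by (auto intro!: derivative_eq_intros simp: field_simps)
         (use sin_cos_squared_add3[of x] in linarith)
  qed simp
  then show ?thesis
    by (simp add: integral_unique)
qed

lemma integral_cos_sin_0_2pi: "integral {0..2*pi} (\<lambda>x. cos x * sin x) = 0"
proof -
  have "((\<lambda>x. cos x * sin x) has_integral (sin (2*pi) * sin (2*pi) / 2 - sin 0 * sin 0 / 2)) {0..2*pi}"
    by (rule has_integral_real_derivative) (auto intro!: derivative_eq_intros)
  then show ?thesis
    by (simp add: integral_unique)
qed

section \<open>Satellite geometry\<close>

definition sat_dist_sq :: "real \<Rightarrow> real \<Rightarrow> real \<Rightarrow> real" where
  "sat_dist_sq r R c = R^2 + r^2 - 2 * r * R * c"

definition zenith_cos :: "real \<Rightarrow> real \<Rightarrow> real \<Rightarrow> real" where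
  "zenith_cos r R c = (R * c - r) / sqrt (sat_dist_sq r R c)"

lemma satD_eq: "satD r h c = sqrt (sat_dist_sq r (r + h) c)"
  by (simp add: satD_def sat_dist_sq_def)

lemma sat_dist_sq_one: "sat_dist_sq r R 1 = (R - r)^2"
  by (simp add: sat_dist_sq_def power2_eq_square algebra_simps)

lemma sat_dist_sq_ge:
  assumes "0 < r" "r < R" "c \<le> 1"
  shows "(R - r)^2 \<le> sat_dist_sq r R c"
proof -
  have "sat_dist_sq r R c - (R - r)^2 = 2 * r * R * (1 - c)"
    by (simp add: sat_dist_sq_def power2_eq_square algebra_simps)
  moreover have "2 * r * R * (1 - c) \<ge> 0"
    using assms by simp
  ultimately show ?thesis by linarith
qed

lemma sat_dist_sq_pos:
  assumes "0 < r" "r < R" "c \<le> 1"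
  shows "sat_dist_sq r R c > 0"
proof -
  have "0 < (R - r)^2"
    using assms by simp
  then show ?thesis
    using sat_dist_sq_ge[OF assms] by linarith
qed

lemma abs_zenith_cos_le:
  assumes "0 < r" "r < R" "-1 \<le> c" "c \<le> 1"
  shows "\<bar>zenith_cos r R c\<bar> \<le> 1"
proof -
  have "sat_dist_sq r R c - (R * c - r)^2 = R^2 * (1 - c^2)"
    by (simp add: sat_dist_sq_def power2_eq_square algebra_simps)
  moreover have "0 \<le> R^2 * (1 - c^2)"
    using assms by (simp add: abs_square_le_1)
  ultimately have "(R * c - r)^2 \<le> sat_dist_sq r R c"
    by linarith
  then have "\<bar>R * c - r\<bar> \<le> sqrt (sat_dist_sq r R c)"
    using real_le_rsqrt[of "\<bar>R * c - r\<bar>"] by simp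
  then show ?thesis
    using sat_dist_sq_pos[OF assms(1,2,4)] by (simp add: zenith_cos_def abs_divide divide_le_eq_1)
qed

lemma zenith_cos_one: "0 < r \<Longrightarrow> r < R \<Longrightarrow> zenith_cos r R 1 = 1"
  by (simp add: zenith_cos_def sat_dist_sq_one)

lemma cos_phiL:
  "0 < r \<Longrightarrow> 0 < h \<Longrightarrow> -1 \<le> c \<Longrightarrow> c \<le> 1 \<Longrightarrow> cos (phiL r h c) = zenith_cos r (r + h) c"
  unfolding phiL_def satD_eq zenith_cos_def[symmetric]
  by (simp add: cos_arccos_abs abs_zenith_cos_le)

lemma sin_phiL:
  "0 < r \<Longrightarrow> 0 < h \<Longrightarrow> -1 \<le> c \<Longrightarrow> c \<le> 1 \<Longrightarrow>
    sin (phiL r h c) = sqrt (1 - (zenith_cos r (r + h) c)^2)"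
  unfolding phiL_def satD_eq zenith_cos_def[symmetric]
  by (simp add: sin_arccos_abs abs_zenith_cos_le)

lemma satL_eq:
  "0 < r \<Longrightarrow> 0 < h \<Longrightarrow> c \<le> 1 \<Longrightarrow> satL \<rho> \<eta> r h c = 2 * \<eta> * \<rho> / sat_dist_sq r (r + h) c"
  using sat_dist_sq_pos[of r "r + h" c] by (simp add: satL_def satD_eq)

lemma sat_dist_sq_deriv: "(sat_dist_sq r R has_real_derivative - 2 * r * R) (at c)"
  unfolding sat_dist_sq_def[abs_def] by (auto intro!: derivative_eq_intros)

lemma has_integral_inverse_sat_dist_sq:
  assumes "0 < r" "r < R" "a \<le> 1"
  shows "((\<lambda>c. 1 / sat_dist_sq r R c) has_integral
           (ln (sat_dist_sq r R a) - ln (sat_dist_sq r R 1)) / (2 * r * R)) {a..1}"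
proof -
  let ?F = "\<lambda>c. - ln (sat_dist_sq r R c) / (2 * r * R)"
  have "((\<lambda>c. 1 / sat_dist_sq r R c) has_integral ?F 1 - ?F a) {a..1}"
  proof (rule has_integral_real_derivative[OF \<open>a \<le> 1\<close>])
    fix x assume "a \<le> x" "x \<le> 1"
    then have "sat_dist_sq r R x > 0"
      using sat_dist_sq_pos assms by simp
    then show "(?F has_real_derivative 1 / sat_dist_sq r R x) (at x)"
      using assms by (auto intro!: derivative_eq_intros sat_dist_sq_deriv simp: field_simps)
  qed
  then show ?thesis
    by (simp add: diff_divide_distrib)
qed

lemma has_integral_zenith_cos_over_sat_dist_sq:
  assumes "0 < r" "r < R" "a \<le> 1"
  defines "F \<equiv> \<lambda>c. ((R^2 - r^2) / sqrt (sat_dist_sq r R c) + sqrt (sat_dist_sq r R c)) / (2 * r^2 * R)"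
  shows "((\<lambda>c. zenith_cos r R c / sat_dist_sq r R c) has_integral (F 1 - F a)) {a..1}"
proof (rule has_integral_real_derivative[OF \<open>a \<le> 1\<close>])
  fix x assume "a \<le> x" "x \<le> 1"
  define u where "u = sat_dist_sq r R x"
  have "u > 0"
    using sat_dist_sq_pos assms \<open>x \<le> 1\<close> by (simp add: u_def)
  have u: "R * x - r = (R^2 - r^2 - u) / (2 * r)"
    using \<open>0 < r\<close> by (simp add: u_def sat_dist_sq_def field_simps power2_eq_square)
  have s: "sqrt u * (sqrt u * z) = u * z" for z
    using \<open>u > 0\<close> by (simp add: mult.assoc[symmetric])
  show "(F has_real_derivative zenith_cos r R x / sat_dist_sq r R x) (at x)"
    unfolding F_def zenith_cos_def u_def[symmetric] u
    using \<open>u > 0\<close> assms(1,2)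
    by (auto intro!: derivative_eq_intros sat_dist_sq_deriv simp: u_def[symmetric] field_simps power2_eq_square s)
qed

lemma has_integral_zenith_cos_sq_over_sat_dist_sq:
  assumes "0 < r" "r < R" "a \<le> 1"
  defines "F \<equiv> \<lambda>c. ((R^2 - r^2)^2 / sat_dist_sq r R c + 2 * (R^2 - r^2) * ln (sat_dist_sq r R c)
                     - sat_dist_sq r R c) / (8 * r^3 * R)"
  shows "((\<lambda>c. (zenith_cos r R c)^2 / sat_dist_sq r R c) has_integral (F 1 - F a)) {a..1}"
proof (rule has_integral_real_derivative[OF \<open>a \<le> 1\<close>])
  fix x assume "a \<le> x" "x \<le> 1"
  define u where "u = sat_dist_sq r R x"
  have "u > 0"
    using sat_dist_sq_pos assms \<open>x \<le> 1\<close> by (simp add: u_def)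
  have u: "R * x - r = (R^2 - r^2 - u) / (2 * r)"
    using \<open>0 < r\<close> by (simp add: u_def sat_dist_sq_def field_simps power2_eq_square)
  show "(F has_real_derivative (zenith_cos r R x)^2 / sat_dist_sq r R x) (at x)"
    unfolding F_def zenith_cos_def u_def[symmetric] u power_divide real_sqrt_pow2[OF less_imp_le[OF \<open>u > 0\<close>]]
    using \<open>u > 0\<close> assms(1,2)
    by (auto intro!: derivative_eq_intros sat_dist_sq_deriv simp: u_def[symmetric] field_simps power2_eq_square power3_eq_cube)
qed

definition zenith_factor :: "real \<Rightarrow> real \<Rightarrow> 4 \<Rightarrow> real \<Rightarrow> real" where
  "zenith_factor r R a c =
     (if a = 1 \<or> a = 2 then sqrt (1 - (zenith_cos r R c)^2) else if a = 3 then zenith_cos r R c else 1)"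

definition azimuth_factor :: "4 \<Rightarrow> real \<Rightarrow> real" where
  "azimuth_factor a \<theta> = (if a = 1 then cos \<theta> else if a = 2 then sin \<theta> else 1)"

lemma vector_4_nth [simp]:
  "(vector [x, y, z, w] :: 'a::zero^4) $ 1 = x"
  "(vector [x, y, z, w] :: 'a::zero^4) $ 2 = y"
  "(vector [x, y, z, w] :: 'a::zero^4) $ 3 = z"
  "(vector [x, y, z, w] :: 'a::zero^4) $ 4 = w"
  unfolding vector_def by simp_all

lemma augU_nth:
  assumes "0 < r" "0 < h" "-1 \<le> c" "c \<le> 1"
  shows "augU r h c \<theta> $ a = zenith_factor r (r + h) a c * azimuth_factor a \<theta>"
  using exhaust_4[of a] sin_phiL[OF assms] cos_phiL[OF assms]
  by (auto simp: augU_def zenith_factor_def azimuth_factor_def)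

lemma borel_measurable_zenith_cos [measurable]: "zenith_cos r R \<in> borel_measurable borel"
  unfolding zenith_cos_def[abs_def] sat_dist_sq_def by measurable

lemma borel_measurable_zenith_factor [measurable]: "zenith_factor r R a \<in> borel_measurable borel"
  unfolding zenith_factor_def[abs_def] by measurable

lemma continuous_on_azimuth_factor: "continuous_on UNIV (azimuth_factor a)"
  unfolding azimuth_factor_def[abs_def] by (cases "a = 1"; cases "a = 2") (auto intro!: continuous_intros)

lemma abs_azimuth_factor_le: "\<bar>azimuth_factor a \<theta>\<bar> \<le> 1"
  by (simp add: azimuth_factor_def)

lemma abs_zenith_factor_le:
  assumes "0 < r" "r < R" "-1 \<le> c" "c \<le> 1"
  shows "\<bar>zenith_factor r R a c\<bar> \<le> 1"
proof -
  have "\<bar>zenith_cos r R c\<bar> \<le> 1"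
    by (rule abs_zenith_cos_le[OF assms])
  moreover have "(zenith_cos r R c)^2 \<le> 1"
    using calculation by (simp add: abs_square_le_1)
  ultimately show ?thesis
    by (auto simp: zenith_factor_def)
qed

definition clamp_unit :: "real \<Rightarrow> real" where
  "clamp_unit c = max (-1) (min 1 c)"

lemma clamp_unit_bounds: "-1 \<le> clamp_unit c" "clamp_unit c \<le> 1"
  by (simp_all add: clamp_unit_def)

lemma clamp_unit_id: "-1 \<le> c \<Longrightarrow> c \<le> 1 \<Longrightarrow> clamp_unit c = c"
  by (simp add: clamp_unit_def)

lemma borel_measurable_clamp_unit [measurable]: "clamp_unit \<in> borel_measurable borel"
  unfolding clamp_unit_def by measurable

lemma integral_azimuth_factor_product:
  "integral\<^sup>L (uniform_measure lborel {0..<2*pi}) (\<lambda>\<theta>. azimuth_factor a \<theta> * azimuth_factor b \<theta>) =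
     (if a = b \<and> (a = 1 \<or> a = 2) then 1 / 2
      else if (a = 3 \<or> a = 4) \<and> (b = 3 \<or> b = 4) then 1 else 0)"
proof -
  have "integral\<^sup>L (uniform_measure lborel {0..<2*pi}) (\<lambda>\<theta>. azimuth_factor a \<theta> * azimuth_factor b \<theta>)
      = integral {0..2*pi} (\<lambda>\<theta>. azimuth_factor a \<theta> * azimuth_factor b \<theta>) / (2*pi)"
    by (intro integral_uniform_measure_0_2pi continuous_on_mult continuous_on_azimuth_factor)
  also have "integral {0..2*pi} (\<lambda>\<theta>. azimuth_factor a \<theta> * azimuth_factor b \<theta>) =
      (if a = b \<and> (a = 1 \<or> a = 2) then pi else if (a = 3 \<or> a = 4) \<and> (b = 3 \<or> b = 4) then 2 * pi else 0)"
    using exhaust_4[of a] exhaust_4[of b]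
    by (elim disjE) (simp_all add: azimuth_factor_def integral_cos_0_2pi integral_sin_0_2pi
        integral_cos_sq_0_2pi integral_sin_sq_0_2pi integral_cos_sin_0_2pi mult.commute[of "sin _" "cos _"])
  finally show ?thesis
    by simp blast
qed

locale satellite_geometry =
  fixes r h \<phi> R :: real
  defines "R \<equiv> r + h"
  assumes r_pos: "0 < r" and h_pos: "0 < h" and \<phi>_pos: "0 < \<phi>" and \<phi>_less: "\<phi> < pi / 2"
begin

abbreviation "\<chi>m \<equiv> chimax r h \<phi>"
abbreviation "Dm \<equiv> Dmax r h \<phi>"

lemma r_less_R: "r < R"
  using h_pos by (simp add: R_def)

lemma R_minus_r: "R - r = h"
  by (simp add: R_def)

lemma R_pos: "0 < R"
  using r_pos r_less_R by linarith

lemma chimax_eq: "\<chi>m = (R^2 + r^2 - Dm^2) / (2 * r * R)"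
  by (simp add: chimax_def R_def)

lemma cos_\<phi>_bounds: "0 < cos \<phi>" "cos \<phi> < 1"
proof -
  show "0 < cos \<phi>"
    using \<phi>_pos \<phi>_less by (intro cos_gt_zero_pi) auto
  have "cos \<phi> < cos 0"
    using \<phi>_pos \<phi>_less by (intro cos_monotone_0_pi) auto
  then show "cos \<phi> < 1" by simp
qed

text \<open>\<open>Dm\<close> is the positive root of \<open>D\<^sup>2 + 2 r cos \<phi> D = R\<^sup>2 - r\<^sup>2\<close>: by the law of cosines,
  the distance to a satellite on the orbit seen at zenith angle exactly \<open>\<phi>\<close>.\<close>

lemma Dmax_quadratic: "Dm^2 + 2 * r * cos \<phi> * Dm = R^2 - r^2"
  and Dmax_pos: "0 < Dm"
proof -
  define q where "q = h^2 + 2 * h * r + r^2 * (cos \<phi>)^2"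
  have q_eq: "q = R^2 - r^2 + (r * cos \<phi>)^2"
    by (simp add: q_def R_def power2_eq_square algebra_simps)
  have "0 < R^2 - r^2"
    using r_pos r_less_R by (simp add: power_strict_mono)
  then have "(r * cos \<phi>)^2 < q"
    unfolding q_eq by linarith
  then have "r * cos \<phi> < sqrt q"
    by (rule real_less_rsqrt)
  moreover have Dm_eq: "Dm = sqrt q - r * cos \<phi>"
    by (simp add: Dmax_def q_def)
  ultimately show "0 < Dm"
    by simp
  have "0 \<le> q"
    unfolding q_eq using \<open>0 < R^2 - r^2\<close> by simp
  then show "Dm^2 + 2 * r * cos \<phi> * Dm = R^2 - r^2"
    unfolding Dm_eq by (simp add: power2_diff q_eq power2_eq_square algebra_simps)
qed

lemma h_less_Dmax: "h < Dm"
proof (rule ccontr)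
  assume "\<not> h < Dm"
  then have "Dm^2 + 2 * r * cos \<phi> * Dm \<le> h^2 + 2 * r * cos \<phi> * h"
    using Dmax_pos r_pos cos_\<phi>_bounds by (intro add_mono power_mono mult_left_mono) auto
  moreover have "2 * r * cos \<phi> * h < 2 * r * h"
    using r_pos h_pos cos_\<phi>_bounds by simp
  moreover have "R^2 - r^2 = h^2 + 2 * r * h"
    by (simp add: R_def power2_eq_square algebra_simps)
  ultimately show False
    using Dmax_quadratic by linarith
qed

lemma Dmax_less: "Dm < R + r"
proof -
  have "0 < 2 * r * cos \<phi> * Dm"
    using Dmax_pos r_pos cos_\<phi>_bounds by simp
  then have "Dm^2 < R^2 - r^2"
    using Dmax_quadratic by linarith
  also have "\<dots> < (R + r)^2"
    using r_pos R_pos by (simp add: power2_eq_square algebra_simps add_pos_pos)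
  finally show ?thesis
    by (rule power_less_imp_less_base) (use r_pos R_pos in simp)
qed

lemma chimax_bounds: "-1 < \<chi>m" "\<chi>m < 1"
proof -
  have den: "0 < 2 * r * R"
    using r_pos R_pos by simp
  have "(R - r)^2 < Dm^2"
    using h_less_Dmax h_pos by (simp add: R_def power_strict_mono)
  then have "R^2 + r^2 - Dm^2 < 1 * (2 * r * R)"
    by (simp add: power2_eq_square algebra_simps)
  then show "\<chi>m < 1"
    unfolding chimax_eq using den by (simp only: pos_divide_less_eq)
  have "Dm^2 < (R + r)^2"
    using Dmax_less Dmax_pos by (simp add: power_strict_mono)
  then have "-1 * (2 * r * R) < R^2 + r^2 - Dm^2"
    by (simp add: power2_eq_square algebra_simps)
  then show "-1 < \<chi>m"
    unfolding chimax_eq using den by (simp only: pos_less_divide_eq)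
qed

lemma sat_dist_sq_chimax: "sat_dist_sq r R \<chi>m = Dm^2"
  using r_pos R_pos by (simp add: sat_dist_sq_def chimax_eq)

lemma zenith_cos_chimax: "zenith_cos r R \<chi>m = cos \<phi>"
proof -
  have "2 * r * (R * \<chi>m) = R^2 + r^2 - Dm^2"
    using r_pos R_pos by (simp add: chimax_eq)
  then have "2 * r * (R * \<chi>m - r - cos \<phi> * Dm) = 0"
    using Dmax_quadratic by (simp add: algebra_simps power2_eq_square)
  then have "R * \<chi>m - r = cos \<phi> * Dm"
    using r_pos by simp
  then show ?thesis
    using Dmax_pos by (simp add: zenith_cos_def sat_dist_sq_chimax)
qed

lemma chimax_le_iff: "\<chi>m \<le> c \<longleftrightarrow> sat_dist_sq r R c \<le> Dm^2"
proof -
  have "\<chi>m \<le> c \<longleftrightarrow> R^2 + r^2 - Dm^2 \<le> 2 * r * R * c"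
    using r_pos R_pos by (simp add: chimax_eq pos_divide_le_eq mult.commute)
  then show ?thesis
    unfolding sat_dist_sq_def by linarith
qed

lemma visible_iff:
  assumes "-1 \<le> c" "c \<le> 1"
  shows "visible r h \<phi> c \<longleftrightarrow> \<chi>m \<le> c"
proof -
  define D where "D = sqrt (sat_dist_sq r R c)"
  have "D > 0" and D_sq: "D^2 = sat_dist_sq r R c"
    using sat_dist_sq_pos[OF r_pos r_less_R assms(2)] by (simp_all add: D_def)
  have "visible r h \<phi> c \<longleftrightarrow> arccos (zenith_cos r R c) \<le> arccos (cos \<phi>)"
    using \<phi>_pos \<phi>_less
    by (simp add: visible_def phiL_def satD_eq zenith_cos_def arccos_cos R_def)
  also have "\<dots> \<longleftrightarrow> cos \<phi> \<le> zenith_cos r R c"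
    using abs_zenith_cos_le[OF r_pos r_less_R assms] cos_\<phi>_bounds
    by (intro arccos_le_mono) auto
  also have "\<dots> \<longleftrightarrow> cos \<phi> * D \<le> R * c - r"
    using \<open>D > 0\<close> by (simp add: zenith_cos_def D_def[symmetric] le_divide_eq)
  also have "R * c - r = (R^2 - r^2 - D^2) / (2 * r)"
    using r_pos unfolding D_sq by (simp add: sat_dist_sq_def field_simps power2_eq_square)
  also have "cos \<phi> * D \<le> (R^2 - r^2 - D^2) / (2 * r) \<longleftrightarrow>
      D^2 + 2 * r * cos \<phi> * D \<le> Dm^2 + 2 * r * cos \<phi> * Dm"
    unfolding Dmax_quadratic[symmetric] using r_pos by (simp add: pos_le_divide_eq) argo
  also have "\<dots> \<longleftrightarrow> (D - Dm) * (D + Dm + 2 * r * cos \<phi>) \<le> 0"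
    by (simp add: power2_eq_square algebra_simps)
  also have "\<dots> \<longleftrightarrow> D \<le> Dm"
  proof -
    have "0 < D + Dm + 2 * r * cos \<phi>"
      using \<open>D > 0\<close> Dmax_pos r_pos cos_\<phi>_bounds by (simp add: add_pos_pos)
    then show ?thesis
      by (simp add: mult_le_0_iff)
  qed
  also have "\<dots> \<longleftrightarrow> D^2 \<le> Dm^2"
    using \<open>D > 0\<close> Dmax_pos by (simp add: abs_le_square_iff[symmetric])
  finally show ?thesis
    unfolding D_sq chimax_le_iff .
qed

section \<open>Moments of the visible cap\<close>

definition zenith_moment :: "nat \<Rightarrow> real" where
  "zenith_moment k = integral {\<chi>m..1} (\<lambda>c. zenith_cos r R c ^ k / sat_dist_sq r R c)"

lemma continuous_on_sat_dist_sq: "continuous_on A (sat_dist_sq r R)"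
  unfolding sat_dist_sq_def[abs_def] by (intro continuous_intros)

lemma sat_dist_sq_pos_chimax: "c \<in> {\<chi>m..1} \<Longrightarrow> 0 < sat_dist_sq r R c"
  using sat_dist_sq_pos[OF r_pos r_less_R] by simp

lemma continuous_on_zenith_cos: "continuous_on {\<chi>m..1} (zenith_cos r R)"
  unfolding zenith_cos_def[abs_def] using sat_dist_sq_pos_chimax
  by (intro continuous_intros continuous_on_sat_dist_sq) fastforce

lemma abs_zenith_cos_le_chimax: "c \<in> {\<chi>m..1} \<Longrightarrow> \<bar>zenith_cos r R c\<bar> \<le> 1"
  using abs_zenith_cos_le[OF r_pos r_less_R] chimax_bounds by simp

lemma zenith_moment_0: "zenith_moment 0 = ln (Dm / h) / (r * R)"
proof -
  have "zenith_moment 0 = (ln (Dm^2) - ln (h^2)) / (2 * r * R)"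
    using has_integral_inverse_sat_dist_sq[OF r_pos r_less_R less_imp_le[OF chimax_bounds(2)]]
    by (simp add: zenith_moment_def integral_unique sat_dist_sq_chimax sat_dist_sq_one R_minus_r)
  also have "\<dots> = ln (Dm / h) / (r * R)"
    using Dmax_pos h_pos r_pos R_pos by (simp add: ln_realpow ln_div field_simps)
  finally show ?thesis .
qed

lemma zenith_moment_1: "zenith_moment 1 = (1 - (R - r * \<chi>m) / Dm) / r^2"
proof -
  have "zenith_moment 1 =
      ((R^2 - r^2) / (R - r) + (R - r)) / (2 * r^2 * R) - ((R^2 - r^2) / Dm + Dm) / (2 * r^2 * R)"
    using has_integral_zenith_cos_over_sat_dist_sq[OF r_pos r_less_R less_imp_le[OF chimax_bounds(2)]]
      r_less_R Dmax_pos
    by (simp add: zenith_moment_def integral_unique sat_dist_sq_chimax sat_dist_sq_one)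
  also have "\<dots> = (1 - (R - r * \<chi>m) / Dm) / r^2"
    using r_pos r_less_R Dmax_pos
    by (simp add: chimax_eq field_simps power2_eq_square)
  finally show ?thesis .
qed

lemma zenith_moment_2:
  "zenith_moment 2 = (1 - \<chi>m) * ((R + r)^2 + Dm^2) / (4 * r^2 * Dm^2)
     - (R^2 - r^2) / (2 * r^3 * R) * ln (Dm / h)"
proof -
  have "zenith_moment 2 =
      ((R^2 - r^2)^2 / (R - r)^2 + 2 * (R^2 - r^2) * (2 * ln h) - (R - r)^2) / (8 * r^3 * R)
      - ((R^2 - r^2)^2 / Dm^2 + 2 * (R^2 - r^2) * (2 * ln Dm) - Dm^2) / (8 * r^3 * R)"
    using has_integral_zenith_cos_sq_over_sat_dist_sq[OF r_pos r_less_R less_imp_le[OF chimax_bounds(2)]]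
      h_pos Dmax_pos
    by (simp add: zenith_moment_def integral_unique sat_dist_sq_chimax sat_dist_sq_one ln_realpow R_minus_r)
  also have "(R^2 - r^2)^2 / (R - r)^2 = (R + r)^2"
  proof -
    have "(R^2 - r^2)^2 = (R + r)^2 * (R - r)^2"
      by (simp add: power2_eq_square algebra_simps)
    then show ?thesis
      using r_less_R by simp
  qed
  also have "((R + r)^2 + 2 * (R^2 - r^2) * (2 * ln h) - (R - r)^2) / (8 * r^3 * R)
      - ((R^2 - r^2)^2 / Dm^2 + 2 * (R^2 - r^2) * (2 * ln Dm) - Dm^2) / (8 * r^3 * R)
    = (1 - \<chi>m) * ((R + r)^2 + Dm^2) / (4 * r^2 * Dm^2)
     - (R^2 - r^2) / (2 * r^3 * R) * (ln Dm - ln h)"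
    using r_pos r_less_R Dmax_pos
    by (simp add: chimax_eq field_simps power2_eq_square power3_eq_cube)
  finally show ?thesis
    using Dmax_pos h_pos by (simp add: ln_div)
qed

lemma Bc_eq: "Bc \<rho> \<eta> r h \<phi> = \<eta> * \<rho> * zenith_moment 0"
  unfolding Bc_def zenith_moment_0 by (simp add: R_def)

lemma Ec_eq: "Ec \<rho> \<eta> r h \<phi> = \<eta> * \<rho> * zenith_moment 1"
  unfolding Ec_def zenith_moment_1 by (simp add: R_def)

lemma Ctil_eq: "Ctil \<rho> \<eta> r h \<phi> = \<eta> * \<rho> * zenith_moment 2"
  unfolding Ctil_def zenith_moment_2 by (simp add: Let_def R_def)

lemma Atil_eq: "Atil \<rho> \<eta> r h \<phi> = \<eta> * \<rho> * (zenith_moment 0 - zenith_moment 2)"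
proof -
  have "Atil \<rho> \<eta> r h \<phi> = 2 * \<rho> * \<eta> * (ln (Dm / h) * (R^2 + r^2) / (4 * r^3 * R)
      - (1 - \<chi>m) * (Dm^2 + r * R * (1 + \<chi>m)) / (4 * r^2 * Dm^2))"
    by (simp add: Atil_def Let_def R_def)
  also have "\<dots> = \<eta> * \<rho> * (zenith_moment 0 - zenith_moment 2)"
    using r_pos R_pos Dmax_pos
    by (simp add: zenith_moment_0 zenith_moment_2 chimax_eq field_simps power2_eq_square power3_eq_cube)
  finally show ?thesis .
qed

lemma continuous_on_zenith_moment_integrand:
  "continuous_on {\<chi>m..1} (\<lambda>c. zenith_cos r R c ^ k / sat_dist_sq r R c)"
  using sat_dist_sq_pos_chimax
  by (intro continuous_intros continuous_on_zenith_cos continuous_on_sat_dist_sq) fastforce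

lemma zenith_moment_0_minus_2:
  "zenith_moment 0 - zenith_moment 2 =
     integral {\<chi>m..1} (\<lambda>c. (1 - (zenith_cos r R c)^2) / sat_dist_sq r R c)"
proof -
  have "zenith_moment 0 - zenith_moment 2 =
      integral {\<chi>m..1} (\<lambda>c. zenith_cos r R c ^ 0 / sat_dist_sq r R c - zenith_cos r R c ^ 2 / sat_dist_sq r R c)"
    unfolding zenith_moment_def
    by (rule integral_diff[symmetric])
       (intro integrable_continuous_interval continuous_on_zenith_moment_integrand)+
  then show ?thesis
    by (simp add: diff_divide_distrib)
qed

lemma zenith_moment_2_less_0: "zenith_moment 2 < zenith_moment 0"
proof -
  have "0 < integral {\<chi>m..1} (\<lambda>c. (1 - (zenith_cos r R c)^2) / sat_dist_sq r R c)"
  proof (rule integral_pos_if_continuous_nonneg)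
    show "continuous_on {\<chi>m..1} (\<lambda>c. (1 - (zenith_cos r R c)^2) / sat_dist_sq r R c)"
      using sat_dist_sq_pos_chimax
      by (intro continuous_intros continuous_on_zenith_cos continuous_on_sat_dist_sq) fastforce
    show "0 \<le> (1 - (zenith_cos r R c)^2) / sat_dist_sq r R c" if "c \<in> {\<chi>m..1}" for c
      using abs_zenith_cos_le_chimax[OF that] sat_dist_sq_pos_chimax[OF that]
      by (simp add: abs_square_le_1)
    have "(cos \<phi>)^2 < 1"
      using cos_\<phi>_bounds by (simp add: abs_square_less_1)
    then show "(1 - (zenith_cos r R \<chi>m)^2) / sat_dist_sq r R \<chi>m \<noteq> 0"
      using Dmax_pos by (simp add: zenith_cos_chimax sat_dist_sq_chimax)
  qed (use chimax_bounds in auto)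
  then show ?thesis
    using zenith_moment_0_minus_2 by simp
qed

lemma zenith_moment_det_pos: "0 < zenith_moment 2 * zenith_moment 0 - (zenith_moment 1)^2"
proof -
  have "continuous_on {\<chi>m..1} (\<lambda>c. 1 / sat_dist_sq r R c)"
    using continuous_on_zenith_moment_integrand[of 0] by simp
  moreover have "zenith_cos r R \<chi>m \<noteq> zenith_cos r R 1"
    using cos_\<phi>_bounds by (simp add: zenith_cos_chimax zenith_cos_one[OF r_pos r_less_R])
  ultimately show ?thesis
    using integral_weighted_variance_pos[of "\<chi>m" 1 "zenith_cos r R" "\<lambda>c. 1 / sat_dist_sq r R c" "\<chi>m" 1]
      continuous_on_zenith_cos chimax_bounds sat_dist_sq_pos_chimax
    by (simp add: zenith_moment_def)
qed

section \<open>The limiting Fisher information\<close>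

text \<open>Clamping \<open>c\<close> to \<open>[-1, 1]\<close> makes the entry bounded on all of \<open>\<real>\<close>; it changes nothing
  where the law of \<open>cos \<phi>\<^sub>E\<close> lives.\<close>

definition zenith_entry :: "real \<Rightarrow> real \<Rightarrow> 4 \<Rightarrow> 4 \<Rightarrow> real \<Rightarrow> real" where
  "zenith_entry \<rho> \<eta> a b c =
     (if \<chi>m \<le> clamp_unit c
      then 2 * \<eta> * \<rho> / sat_dist_sq r R (clamp_unit c) * zenith_factor r R a (clamp_unit c) * zenith_factor r R b (clamp_unit c)
      else 0)"

lemma borel_measurable_zenith_entry [measurable]: "zenith_entry \<rho> \<eta> a b \<in> borel_measurable borel"
  unfolding zenith_entry_def[abs_def] sat_dist_sq_def by measurable

lemma abs_zenith_entry_le: "\<bar>zenith_entry \<rho> \<eta> a b c\<bar> \<le> 2 * \<bar>\<eta> * \<rho>\<bar> / h^2"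
proof -
  let ?c = "clamp_unit c"
  have "h^2 \<le> sat_dist_sq r R ?c"
    using sat_dist_sq_ge[OF r_pos r_less_R clamp_unit_bounds(2)] by (simp add: R_minus_r)
  moreover have "\<bar>zenith_factor r R a ?c * zenith_factor r R b ?c\<bar> \<le> 1"
    using abs_zenith_factor_le[OF r_pos r_less_R clamp_unit_bounds] by (simp add: abs_mult mult_le_one)
  moreover have "\<bar>2 * \<eta> * \<rho> / sat_dist_sq r R ?c\<bar> \<le> 2 * \<bar>\<eta> * \<rho>\<bar> / h^2"
    using calculation(1) h_pos by (simp add: abs_mult abs_divide frac_le)
  ultimately have "\<bar>2 * \<eta> * \<rho> / sat_dist_sq r R ?c\<bar> * \<bar>zenith_factor r R a ?c * zenith_factor r R b ?c\<bar>
      \<le> 2 * \<bar>\<eta> * \<rho>\<bar> / h^2 * 1"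
    by (intro mult_mono) auto
  then show ?thesis
    by (simp add: zenith_entry_def abs_mult mult.assoc)
qed

lemma fim_summand_nth:
  assumes "-1 \<le> c" "c \<le> 1"
  shows "(if visible r h \<phi> c then satL \<rho> \<eta> r h c else 0) * (augU r h c \<theta> $ a * augU r h c \<theta> $ b)
       = zenith_entry \<rho> \<eta> a b c * (azimuth_factor a \<theta> * azimuth_factor b \<theta>)"
  using assms r_pos h_pos
  by (simp add: visible_iff augU_nth satL_eq zenith_entry_def clamp_unit_id R_def)

lemma continuous_on_zenith_factor: "continuous_on {\<chi>m..1} (zenith_factor r R a)"
proof -
  have "continuous_on {\<chi>m..1} (\<lambda>c. sqrt (1 - (zenith_cos r R c)^2))"
    by (intro continuous_intros continuous_on_zenith_cos)
  then show ?thesis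
    unfolding zenith_factor_def[abs_def]
    by (cases "a = 1 \<or> a = 2"; cases "a = 3") (auto intro: continuous_on_zenith_cos)
qed

lemma integral_zenith_entry:
  "integral\<^sup>L (uniform_measure lborel {-1..1}) (zenith_entry \<rho> \<eta> a b) =
     \<eta> * \<rho> * integral {\<chi>m..1} (\<lambda>c. zenith_factor r R a c * zenith_factor r R b c / sat_dist_sq r R c)"
proof -
  let ?g = "\<lambda>c. 2 * \<eta> * \<rho> * (zenith_factor r R a c * zenith_factor r R b c / sat_dist_sq r R c)"
  have "integral\<^sup>L (uniform_measure lborel {-1..1}) (zenith_entry \<rho> \<eta> a b)
      = (\<integral>x. indicator {-1..1} x * zenith_entry \<rho> \<eta> a b x \<partial>lborel) / 2"
    by (subst integral_uniform_measure_lborel[where m = 2]) auto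
  also have "(\<lambda>x. indicator {-1..1} x * zenith_entry \<rho> \<eta> a b x) = (\<lambda>x. indicator {\<chi>m..1} x * ?g x)"
    using chimax_bounds by (auto simp: fun_eq_iff indicator_def zenith_entry_def clamp_unit_id)
  also have "(\<integral>x. indicator {\<chi>m..1} x * ?g x \<partial>lborel) = integral {\<chi>m..1} ?g"
    using sat_dist_sq_pos_chimax
    by (intro lborel_integral_indicator_eq_integral continuous_intros continuous_on_zenith_factor
        continuous_on_sat_dist_sq) fastforce
  also have "integral {\<chi>m..1} ?g =
      2 * \<eta> * \<rho> * integral {\<chi>m..1} (\<lambda>c. zenith_factor r R a c * zenith_factor r R b c / sat_dist_sq r R c)"
    by (rule integral_mult_right)
  finally show ?thesis
    by simp
qed

lemma integral_zenith_factor_products: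
  "integral {\<chi>m..1} (\<lambda>c. zenith_factor r R 1 c * zenith_factor r R 1 c / sat_dist_sq r R c)
     = zenith_moment 0 - zenith_moment 2"
  "integral {\<chi>m..1} (\<lambda>c. zenith_factor r R 2 c * zenith_factor r R 2 c / sat_dist_sq r R c)
     = zenith_moment 0 - zenith_moment 2"
  "integral {\<chi>m..1} (\<lambda>c. zenith_factor r R 3 c * zenith_factor r R 3 c / sat_dist_sq r R c) = zenith_moment 2"
  "integral {\<chi>m..1} (\<lambda>c. zenith_factor r R 3 c * zenith_factor r R 4 c / sat_dist_sq r R c) = zenith_moment 1"
  "integral {\<chi>m..1} (\<lambda>c. zenith_factor r R 4 c * zenith_factor r R 3 c / sat_dist_sq r R c) = zenith_moment 1"
  "integral {\<chi>m..1} (\<lambda>c. zenith_factor r R 4 c * zenith_factor r R 4 c / sat_dist_sq r R c) = zenith_moment 0"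
proof -
  have sin_sq: "integral {\<chi>m..1} (\<lambda>c. sqrt (1 - (zenith_cos r R c)^2) * sqrt (1 - (zenith_cos r R c)^2) / sat_dist_sq r R c)
      = zenith_moment 0 - zenith_moment 2"
    unfolding zenith_moment_0_minus_2 using abs_zenith_cos_le_chimax
    by (intro integral_cong) (simp add: abs_square_le_1)
  show "integral {\<chi>m..1} (\<lambda>c. zenith_factor r R 1 c * zenith_factor r R 1 c / sat_dist_sq r R c)
     = zenith_moment 0 - zenith_moment 2"
    "integral {\<chi>m..1} (\<lambda>c. zenith_factor r R 2 c * zenith_factor r R 2 c / sat_dist_sq r R c)
     = zenith_moment 0 - zenith_moment 2"
    using sin_sq by (simp_all add: zenith_factor_def)
  show "integral {\<chi>m..1} (\<lambda>c. zenith_factor r R 3 c * zenith_factor r R 3 c / sat_dist_sq r R c) = zenith_moment 2"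
    "integral {\<chi>m..1} (\<lambda>c. zenith_factor r R 3 c * zenith_factor r R 4 c / sat_dist_sq r R c) = zenith_moment 1"
    "integral {\<chi>m..1} (\<lambda>c. zenith_factor r R 4 c * zenith_factor r R 3 c / sat_dist_sq r R c) = zenith_moment 1"
    "integral {\<chi>m..1} (\<lambda>c. zenith_factor r R 4 c * zenith_factor r R 4 c / sat_dist_sq r R c) = zenith_moment 0"
    by (simp_all add: zenith_factor_def zenith_moment_def power2_eq_square)
qed

definition limit_fim :: "real \<Rightarrow> real \<Rightarrow> real^4^4" where
  "limit_fim \<rho> \<eta> = (\<chi> a b.
     integral\<^sup>L (uniform_measure lborel {-1..1}) (zenith_entry \<rho> \<eta> a b) *
     integral\<^sup>L (uniform_measure lborel {0..<2*pi}) (\<lambda>\<theta>. azimuth_factor a \<theta> * azimuth_factor b \<theta>))"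

lemma limit_fim_nth:
  "limit_fim \<rho> \<eta> $ 1 $ 1 = Atil \<rho> \<eta> r h \<phi> / 2" "limit_fim \<rho> \<eta> $ 2 $ 2 = Atil \<rho> \<eta> r h \<phi> / 2"
  "limit_fim \<rho> \<eta> $ 3 $ 3 = Ctil \<rho> \<eta> r h \<phi>" "limit_fim \<rho> \<eta> $ 4 $ 4 = Bc \<rho> \<eta> r h \<phi>"
  "limit_fim \<rho> \<eta> $ 3 $ 4 = Ec \<rho> \<eta> r h \<phi>" "limit_fim \<rho> \<eta> $ 4 $ 3 = Ec \<rho> \<eta> r h \<phi>"
  "limit_fim \<rho> \<eta> $ 1 $ 2 = 0" "limit_fim \<rho> \<eta> $ 2 $ 1 = 0"
  "limit_fim \<rho> \<eta> $ 1 $ 3 = 0" "limit_fim \<rho> \<eta> $ 3 $ 1 = 0"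
  "limit_fim \<rho> \<eta> $ 1 $ 4 = 0" "limit_fim \<rho> \<eta> $ 4 $ 1 = 0"
  "limit_fim \<rho> \<eta> $ 2 $ 3 = 0" "limit_fim \<rho> \<eta> $ 3 $ 2 = 0"
  "limit_fim \<rho> \<eta> $ 2 $ 4 = 0" "limit_fim \<rho> \<eta> $ 4 $ 2 = 0"
  by (simp_all add: limit_fim_def integral_zenith_entry integral_azimuth_factor_product
      integral_zenith_factor_products Atil_eq Bc_eq Ctil_eq Ec_eq)

lemma limit_fim_inverse:
  assumes "0 < \<rho>" "0 < \<eta>"
  defines "L \<equiv> limit_fim \<rho> \<eta>"
  shows "det L \<noteq> 0"
    and "matrix_inv L $ 1 $ 1 + matrix_inv L $ 2 $ 2 = 4 / Atil \<rho> \<eta> r h \<phi>"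
    and "matrix_inv L $ 3 $ 3 = Bc \<rho> \<eta> r h \<phi> / (Ctil \<rho> \<eta> r h \<phi> * Bc \<rho> \<eta> r h \<phi> - (Ec \<rho> \<eta> r h \<phi>)^2)"
proof -
  let ?A = "Atil \<rho> \<eta> r h \<phi>" and ?B = "Bc \<rho> \<eta> r h \<phi>" and ?C = "Ctil \<rho> \<eta> r h \<phi>" and ?E = "Ec \<rho> \<eta> r h \<phi>"
  have "0 < ?A"
    using assms zenith_moment_2_less_0 by (simp add: Atil_eq)
  have "?C * ?B - ?E^2 = (\<eta> * \<rho>)^2 * (zenith_moment 2 * zenith_moment 0 - (zenith_moment 1)^2)"
    by (simp add: Bc_eq Ctil_eq Ec_eq power2_eq_square algebra_simps)
  then have "0 < ?C * ?B - ?E^2"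
    using assms zenith_moment_det_pos by simp
  define d where "d = ?C * ?B - ?E^2"
  define M :: "real^4^4" where "M = (\<chi> a b.
     if a = b \<and> (a = 1 \<or> a = 2) then 2 / ?A
     else if a = 3 \<and> b = 3 then ?B / d
     else if a = 4 \<and> b = 4 then ?C / d
     else if (a = 3 \<and> b = 4) \<or> (a = 4 \<and> b = 3) then - ?E / d else 0)"
  have "d \<noteq> 0"
    using \<open>0 < ?C * ?B - ?E^2\<close> by (simp add: d_def)
  have "L ** M = mat 1"
    using \<open>0 < ?A\<close> \<open>d \<noteq> 0\<close>
    unfolding matrix_matrix_mult_def mat_def vec_eq_iff forall_4 sum_4
    by (simp add: L_def M_def limit_fim_nth field_simps flip: d_def) (simp_all add: d_def power2_eq_square algebra_simps)
  then show "det L \<noteq> 0"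
    using invertible_det_nz invertible_right_inverse by blast
  show "matrix_inv L $ 1 $ 1 + matrix_inv L $ 2 $ 2 = 4 / ?A"
    "matrix_inv L $ 3 $ 3 = ?B / (?C * ?B - ?E^2)"
    using matrix_inv_eqI[OF \<open>L ** M = mat 1\<close>] by (simp_all add: M_def d_def)
qed

end

section \<open>Random constellations\<close>

lemma tdoaFIM_nth:
  "tdoaFIM \<rho> \<eta> r h \<phi> cs ths N $ a $ b =
    (\<Sum>i<N. (if visible r h \<phi> (cs i) then satL \<rho> \<eta> r h (cs i) else 0) *
      (augU r h (cs i) (ths i) $ a * augU r h (cs i) (ths i) $ b))"
  by (simp add: tdoaFIM_def sum_component)

locale random_constellation = prob_space M + satellite_geometry r h \<phi> R
  for M :: "'s measure" and r h \<phi> R +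
  fixes X \<Theta> :: "nat \<Rightarrow> 's \<Rightarrow> real"
  assumes X_measurable [measurable]: "\<And>i. X i \<in> borel_measurable M"
    and distr_X: "\<And>i. distr M lborel (X i) = uniform_measure lborel {-1..1}"
    and distr_\<Theta>: "\<And>i. distr M lborel (\<Theta> i) = uniform_measure lborel {0..<2*pi}"
    and indep: "indep_vars (\<lambda>_. borel) (\<lambda>k. case k of Inl i \<Rightarrow> X i | Inr i \<Rightarrow> \<Theta> i) UNIV"
begin

lemma AE_X_in_range: "AE \<omega> in M. \<forall>i. X i \<omega> \<in> {-1..1}"
proof -
  have "AE \<omega> in M. X i \<omega> \<in> {-1..1}" for i
  proof -
    have "AE x in distr M lborel (X i). x \<in> {-1..1}"
      unfolding distr_X by (rule AE_uniform_measureI) auto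
    then show ?thesis
      by (subst (asm) AE_distr_iff) auto
  qed
  then show ?thesis
    by (subst AE_all_countable) auto
qed

lemma AE_tendsto_fim_average:
  "AE \<omega> in M. \<forall>a b. (\<lambda>N. tdoaFIM \<rho> \<eta> r h \<phi> (\<lambda>i. X i \<omega>) (\<lambda>i. \<Theta> i \<omega>) N $ a $ b / real N)
     \<longlonglongrightarrow> limit_fim \<rho> \<eta> $ a $ b"
proof -
  define Y where "Y a b i \<omega> = zenith_entry \<rho> \<eta> a b (X i \<omega>) * (azimuth_factor a (\<Theta> i \<omega>) * azimuth_factor b (\<Theta> i \<omega>))"
    for a b i \<omega>
  define K where "K = 2 * \<bar>\<eta> * \<rho>\<bar> / h^2 + 1"
  have "0 < K"
    unfolding K_def by (intro add_nonneg_pos) simp_all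
  have azimuth_bound: "\<bar>azimuth_factor a \<theta> * azimuth_factor b \<theta>\<bar> \<le> 1" for a b \<theta>
    using abs_azimuth_factor_le by (simp add: abs_mult mult_le_one)
  have [measurable]: "(\<lambda>\<theta>. azimuth_factor a \<theta> * azimuth_factor b \<theta>) \<in> borel_measurable borel" for a b
    using continuous_on_azimuth_factor by (intro borel_measurable_times borel_measurable_continuous_onI)
  have "AE \<omega> in M. (\<lambda>N. (\<Sum>i<N. Y a b i \<omega>) / real N) \<longlonglongrightarrow> limit_fim \<rho> \<eta> $ a $ b" for a b
  proof (rule strong_law_bounded[OF _ _ \<open>0 < K\<close>])
    show "indep_vars (\<lambda>_. borel) (Y a b) UNIV"
      unfolding Y_def[abs_def] by (rule indep_vars_mult_Inl_Inr[OF indep]) measurable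
    show "Y a b i \<omega> \<in> {-K..K}" for i \<omega>
    proof -
      have "\<bar>Y a b i \<omega>\<bar> \<le> (2 * \<bar>\<eta> * \<rho>\<bar> / h^2) * 1"
        unfolding Y_def abs_mult[of "zenith_entry _ _ _ _ _"]
        by (intro mult_mono abs_zenith_entry_le azimuth_bound) auto
      then show ?thesis
        by (auto simp: K_def abs_le_iff)
    qed
    show "expectation (Y a b i) = limit_fim \<rho> \<eta> $ a $ b" for i
      unfolding Y_def limit_fim_def
      by (subst expectation_mult_Inl_Inr[OF indep, where B\<^sub>f = "2 * \<bar>\<eta> * \<rho>\<bar> / h^2" and B\<^sub>g = 1])
         (simp_all add: abs_zenith_entry_le azimuth_bound distr_X distr_\<Theta>)
  qed
  then have "AE \<omega> in M. \<forall>ab\<in>UNIV. (\<lambda>N. (\<Sum>i<N. Y (fst ab) (snd ab) i \<omega>) / real N)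
      \<longlonglongrightarrow> limit_fim \<rho> \<eta> $ fst ab $ snd ab"
    by (intro AE_finite_allI) auto
  with AE_X_in_range show ?thesis
  proof eventually_elim
    case (elim \<omega>)
    have "tdoaFIM \<rho> \<eta> r h \<phi> (\<lambda>i. X i \<omega>) (\<lambda>i. \<Theta> i \<omega>) N $ a $ b = (\<Sum>i<N. Y a b i \<omega>)" for N a b
      unfolding tdoaFIM_nth Y_def using elim(1) by (intro sum.cong refl fim_summand_nth) auto
    then show ?case
      using elim(2) by simp
  qed
qed

end

theorem mainTheorem3:
  fixes M :: "'s measure" and X :: "nat \<Rightarrow> 's \<Rightarrow> real" and \<Theta> :: "nat \<Rightarrow> 's \<Rightarrow> real"
    and r h phiLmax \<rho> \<eta> :: real
  assumes "prob_space M"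
    and "\<And>i. X i \<in> borel_measurable M" and "\<And>i. \<Theta> i \<in> borel_measurable M"
    and "\<And>i. distr M lborel (X i) = uniform_measure lborel {-1..1}"
    and "\<And>i. distr M lborel (\<Theta> i) = uniform_measure lborel {0..<2*pi}"
    and "prob_space.indep_vars M (\<lambda>_. borel)
           (\<lambda>k. case k of Inl i \<Rightarrow> X i | Inr i \<Rightarrow> \<Theta> i) UNIV"
    and "r > 0" and "h > 0" and "0 < phiLmax" and "phiLmax < pi / 2"
    and "\<rho> > 0" and "\<eta> > 0"
  shows "AE \<omega> in M.
     ((\<lambda>N. real N * (matrix_inv (tdoaFIM \<rho> \<eta> r h phiLmax (\<lambda>i. X i \<omega>) (\<lambda>i. \<Theta> i \<omega>) N) $ 1 $ 1
                   + matrix_inv (tdoaFIM \<rho> \<eta> r h phiLmax (\<lambda>i. X i \<omega>) (\<lambda>i. \<Theta> i \<omega>) N) $ 2 $ 2))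
        \<longlonglongrightarrow> 4 / Atil \<rho> \<eta> r h phiLmax)
   \<and> ((\<lambda>N. real N * matrix_inv (tdoaFIM \<rho> \<eta> r h phiLmax (\<lambda>i. X i \<omega>) (\<lambda>i. \<Theta> i \<omega>) N) $ 3 $ 3)
        \<longlonglongrightarrow> Bc \<rho> \<eta> r h phiLmax /
             (Ctil \<rho> \<eta> r h phiLmax * Bc \<rho> \<eta> r h phiLmax - (Ec \<rho> \<eta> r h phiLmax)^2))"
proof -
  interpret random_constellation M r h phiLmax "r + h" X \<Theta>
    by (intro random_constellation.intro satellite_geometry.intro random_constellation_axioms.intro)
       (use assms in simp_all)
  note limit_inverse = limit_fim_inverse[OF \<open>\<rho> > 0\<close> \<open>\<eta> > 0\<close>]
  from AE_tendsto_fim_average[of \<rho> \<eta>] show ?thesis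
  proof eventually_elim
    case (elim \<omega>)
    let ?T = "tdoaFIM \<rho> \<eta> r h phiLmax (\<lambda>i. X i \<omega>) (\<lambda>i. \<Theta> i \<omega>)"
    have "(\<lambda>N. real N * matrix_inv (?T N) $ i $ j) \<longlonglongrightarrow> matrix_inv (limit_fim \<rho> \<eta>) $ i $ j" for i j
      using elim limit_inverse(1) by (intro tendsto_scaled_matrix_inv_nth) auto
    from tendsto_add[OF this[of 1 1] this[of 2 2]] this[of 3 3] show ?case
      unfolding limit_inverse(2,3) by (simp add: distrib_left)
  qed
qed

end
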